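(* Let $G=(V,E)$ be a temporal graph, $s\in V$, $t_s\in\mathbb{R}$, and let $T$ be either the DFS tree produced by DFS-v1 or the BFS tree produced by temporal BFS, on $G$ from $s$ with starting time $t_s$. For a vertex $v\neq s$, let $O(v)$ be the set of occurrences of $v$ in $T$. If $O(v)\neq\emptyset$, let $v_{\min}\in O(v)$ have minimal time value $\sigma$ among the occurrences in $O(v)$; then the sequence of tree edges on the path from the root to $v_{\min}$ in $T$ is a foremost path from $s$ to $v$, i.e. it is a temporal path from $s$ to $v$ starting at or after $t_s$ and its end time $t_{end}$ is at most $t_{end}(P')$ for every temporal path $P'$ from $s$ to $v$ starting at or after $t_s$. If $O(v)=\emptyset$, then there is no temporal path from $s$ to $v$ starting at or after $t_s$.
   Context: A temporal graph is a pair $G=(V,E)$ where $V$ is a finite set of vertices and $E$ is a finite set of temporal edges, i.e. triples $(u,v,t)$ with $u,v\in V$, $u\neq v$, $t\in\mathbb{R}$ (the time at which the edge is active); distinct elements of $E$ are distinct triples. A temporal path from $x$ to $y$ (starting at or after $t_s$) is a sequence $P=\langle (w_1,w_2,t_1),\dots,(w_k,w_{k+1},t_k)\rangle$ of $k\ge1$ edges of $E$ with $w_1=x$, $w_{k+1}=y$ and $t_s\le t_1\le t_2\le\dots\le t_k$; $t_{start}(P)=t_1$, $t_{end}(P)=t_k$. Temporal DFS-v1. The procedure maintains a value $\sigma(x)\in\mathbb{R}\cup\{\infty\}$ for every $x\in V$, initially $\infty$, and a set of already traversed edges, initially empty, and builds a rooted tree $T$ whose nodes are occurrences of vertices of $G$.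 Each occurrence carries a time value $\sigma$, namely the value assigned to $\sigma(x)$ when that occurrence was created. Start: create the root occurrence of $s$, set $\sigma(s)=t_s$, and make it current. Step (a): let $u$ be the vertex of the current occurrence, $\sigma_u$ its time value, and $A$ the set of edges $(u,v,t)\in E$ not yet traversed with $\sigma_u\le t$. If $A=\emptyset$: if the current occurrence is the root, terminate; otherwise make its parent current and repeat step (a). If $A\neq\emptyset$, choose any vertex $v$ such that $A$ contains an edge to $v$, select the edge $e=(u,v,t)$ of $A$ to $v$ with smallest $t$, mark it traversed and go to step (b). Step (b): if the current value $\sigma(v)>t$, create a new occurrence of $v$ as a child of the current occurrence joined by the tree edge $e$, set $\sigma(v):=t$ (its time value), make it current and go to (a); otherwise go to (a) with the same current occurrence. Temporal BFS. Records are tuples $(x,d,\tau,p)$ (vertex $x$, level $d$, time $\tau$, predecessor record $p$ or none); every record ever created is an occurrence (node) of the BFS tree $T$, rooted at the initial record, with a tree edge from the predecessor record to the record; the level and time of an occurrence are the final values of its fields. For each $x\in V$ a current value $\sigma(x)$ is kept, initially $\infty$, and set to $\tau$ whenever a record of $x$ is created or its time is updated to $\tau$. Initially the FIFO queue $Q$ contains only $(s,0,t_s,\text{none})$ and $\sigma(s)=t_s$; no edge is traversed. While $Q\neq\emptyset$: pop the front record $R=(u,d_u,\sigma_u,p_u)$; let $B$ be the set of edges $(u,v,t)\in E$ not yet traversed with $\sigma_u\le t$; for each vertex $v$ such that $B$ contains an edge to $v$ (in any order), let $e=(u,v,t)$ be the edge of $B$ to $v$ with smallest $t$, mark $e$ traversed,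 and: (i) if $Q$ contains no record of $v$ and $\sigma(v)>t$, create $(v,d_u+1,t,R)$ and append it to $Q$; (ii) if $Q$ contains a record of $v$ with level $d_u+1$ and $\sigma(v)>t$, set that record's time to $t$ and predecessor to $R$; (iii) if $Q$ contains a record of $v$ but none with level $d_u+1$, and $\sigma(v)>t$, create $(v,d_u+1,t,R)$ and append it to $Q$. *)

theory Defs
  imports Complex_Main
begin

type_synonym 'v tedge = "'v \<times> 'v \<times> real"

definition src :: "'v tedge \<Rightarrow> 'v" where "src e = fst e"
definition dst :: "'v tedge \<Rightarrow> 'v" where "dst e = fst (snd e)"
definition tm  :: "'v tedge \<Rightarrow> real" where "tm e = snd (snd e)"

definition temporal_graph :: "'v set \<Rightarrow> 'v tedge set \<Rightarrow> bool" where
  "temporal_graph V E \<longleftrightarrow> finite V \<and> finite E \<and>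
     (\<forall>e\<in>E. src e \<in> V \<and> dst e \<in> V \<and> src e \<noteq> dst e)"

definition temporal_path :: "'v tedge set \<Rightarrow> 'v \<Rightarrow> 'v \<Rightarrow> real \<Rightarrow> 'v tedge list \<Rightarrow> bool" where
  "temporal_path E x y ts P \<longleftrightarrow>
     P \<noteq> [] \<and> set P \<subseteq> E \<and> src (hd P) = x \<and> dst (last P) = y \<and>
     (\<forall>k. Suc k < length P \<longrightarrow> dst (P ! k) = src (P ! Suc k)) \<and>
     ts \<le> tm (hd P) \<and>
     (\<forall>k. Suc k < length P \<longrightarrow> tm (P ! k) \<le> tm (P ! Suc k))"

definition t_end :: "'v tedge list \<Rightarrow> real" where "t_end P = tm (last P)"

definition foremost_path :: "'v tedge set \<Rightarrow> 'v \<Rightarrow> 'v \<Rightarrow> real \<Rightarrow> 'v tedge list \<Rightarrow> bool" where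
  "foremost_path E x y ts P \<longleftrightarrow> temporal_path E x y ts P \<and>
     (\<forall>P'. temporal_path E x y ts P' \<longrightarrow> t_end P \<le> t_end P')"

text \<open>An occurrence (tree node): (vertex, time value sigma, parent index together with
  the tree edge joining the parent to this occurrence, or None for the root).
  A tree is the list of its occurrences; index 0 is the root.\<close>
type_synonym 'v occ = "'v \<times> real \<times> (nat \<times> 'v tedge) option"

definition occ_vertex :: "'v occ \<Rightarrow> 'v" where "occ_vertex o' = fst o'"
definition occ_time :: "'v occ \<Rightarrow> real" where "occ_time o' = fst (snd o')"
definition occ_parent :: "'v occ \<Rightarrow> (nat \<times> 'v tedge) option" where "occ_parent o' = snd (snd o')"

definition occs_of :: "'v occ list \<Rightarrow> 'v \<Rightarrow> nat set" where
  "occs_of T v = {i. i < length T \<and> occ_vertex (T ! i) = v}"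

inductive tree_path :: "'v occ list \<Rightarrow> nat \<Rightarrow> 'v tedge list \<Rightarrow> bool" for T where
  root: "i < length T \<Longrightarrow> occ_parent (T ! i) = None \<Longrightarrow> tree_path T i []"
| step: "i < length T \<Longrightarrow> occ_parent (T ! i) = Some (p, e) \<Longrightarrow> tree_path T p P
          \<Longrightarrow> tree_path T i (P @ [e])"

text \<open>sigma values in R \<union> {\<infinity>}: None represents \<infinity>.  above s t means s > t.\<close>
fun above :: "real option \<Rightarrow> real \<Rightarrow> bool" where
  "above None t = True"
| "above (Some x) t = (x > t)"

record 'v dfs_state =
  d_occ :: "'v occ list"
  d_sig :: "'v \<Rightarrow> real option"
  d_trav :: "'v tedge set"
  d_cur :: nat

definition dfs_init :: "'v \<Rightarrow> real \<Rightarrow> 'v dfs_state" where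
  "dfs_init s ts = \<lparr>d_occ = [(s, ts, None)], d_sig = (\<lambda>_. None)(s := Some ts),
                    d_trav = {}, d_cur = 0\<rparr>"

definition dfs_avail :: "'v tedge set \<Rightarrow> 'v dfs_state \<Rightarrow> 'v tedge set" where
  "dfs_avail E S = {e \<in> E. src e = occ_vertex (d_occ S ! d_cur S) \<and> e \<notin> d_trav S \<and>
                           occ_time (d_occ S ! d_cur S) \<le> tm e}"

text \<open>Choosing a vertex v with an edge of A to v and then the edge of A to v with smallest t
  amounts to choosing an edge e of A whose time is minimal among the edges of A to dst e.\<close>
inductive dfs_step :: "'v tedge set \<Rightarrow> 'v dfs_state \<Rightarrow> 'v dfs_state \<Rightarrow> bool" for E where
  backtrack: "dfs_avail E S = {} \<Longrightarrow> occ_parent (d_occ S ! d_cur S) = Some (p, e0)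
     \<Longrightarrow> dfs_step E S (S\<lparr>d_cur := p\<rparr>)"
| advance_new: "e \<in> dfs_avail E S \<Longrightarrow>
     (\<forall>e'\<in>dfs_avail E S. dst e' = dst e \<longrightarrow> tm e \<le> tm e') \<Longrightarrow>
     above (d_sig S (dst e)) (tm e) \<Longrightarrow>
     dfs_step E S (S\<lparr>d_occ := d_occ S @ [(dst e, tm e, Some (d_cur S, e))],
                    d_sig := (d_sig S)(dst e := Some (tm e)),
                    d_trav := insert e (d_trav S),
                    d_cur := length (d_occ S)\<rparr>)"
| advance_old: "e \<in> dfs_avail E S \<Longrightarrow>
     (\<forall>e'\<in>dfs_avail E S. dst e' = dst e \<longrightarrow> tm e \<le> tm e') \<Longrightarrow>
     \<not> above (d_sig S (dst e)) (tm e) \<Longrightarrow>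
     dfs_step E S (S\<lparr>d_trav := insert e (d_trav S)\<rparr>)"

definition dfs_final :: "'v tedge set \<Rightarrow> 'v dfs_state \<Rightarrow> bool" where
  "dfs_final E S \<longleftrightarrow> dfs_avail E S = {} \<and> d_cur S = 0"

definition dfs_tree :: "'v tedge set \<Rightarrow> 'v \<Rightarrow> real \<Rightarrow> 'v occ list \<Rightarrow> bool" where
  "dfs_tree E s ts T \<longleftrightarrow> (\<exists>S. (dfs_step E)\<^sup>*\<^sup>* (dfs_init s ts) S \<and> dfs_final E S \<and> T = d_occ S)"

text \<open>A record (x, d, tau, p): vertex, level, time, and predecessor record index together
  with the tree edge from the predecessor (None for the initial record).\<close>
type_synonym 'v brec = "'v \<times> nat \<times> real \<times> (nat \<times> 'v tedge) option"

definition r_vertex :: "'v brec \<Rightarrow> 'v" where "r_vertex r = fst r"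
definition r_level :: "'v brec \<Rightarrow> nat" where "r_level r = fst (snd r)"
definition r_time :: "'v brec \<Rightarrow> real" where "r_time r = fst (snd (snd r))"

text \<open>b_recs: all records ever created (indices = record identities); b_queue: the FIFO queue Q;
  b_proc: Some (R, B, W) while the popped record R is being processed, with the edge set B
  computed at pop time and W the vertices not yet handled.\<close>
record 'v bfs_state =
  b_recs :: "'v brec list"
  b_queue :: "nat list"
  b_sig :: "'v \<Rightarrow> real option"
  b_trav :: "'v tedge set"
  b_proc :: "(nat \<times> 'v tedge set \<times> 'v set) option"

definition bfs_init :: "'v \<Rightarrow> real \<Rightarrow> 'v bfs_state" where
  "bfs_init s ts = \<lparr>b_recs = [(s, 0, ts, None)], b_queue = [0],
     b_sig = (\<lambda>_. None)(s := Some ts), b_trav = {}, b_proc = None\<rparr>"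

definition in_queue :: "'v bfs_state \<Rightarrow> 'v \<Rightarrow> bool" where
  "in_queue S v \<longleftrightarrow> (\<exists>i\<in>set (b_queue S). r_vertex (b_recs S ! i) = v)"

definition in_queue_lvl :: "'v bfs_state \<Rightarrow> 'v \<Rightarrow> nat \<Rightarrow> bool" where
  "in_queue_lvl S v d \<longleftrightarrow>
     (\<exists>i\<in>set (b_queue S). r_vertex (b_recs S ! i) = v \<and> r_level (b_recs S ! i) = d)"

inductive bfs_step :: "'v tedge set \<Rightarrow> 'v bfs_state \<Rightarrow> 'v bfs_state \<Rightarrow> bool" for E where
  pop: "b_proc S = None \<Longrightarrow> b_queue S = r # rest \<Longrightarrow>
     B = {e \<in> E. src e = r_vertex (b_recs S ! r) \<and> e \<notin> b_trav S \<and>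
                 r_time (b_recs S ! r) \<le> tm e} \<Longrightarrow>
     bfs_step E S (S\<lparr>b_queue := rest, b_proc := Some (r, B, dst ` B)\<rparr>)"
| finish: "b_proc S = Some (r, B, {}) \<Longrightarrow> bfs_step E S (S\<lparr>b_proc := None\<rparr>)"
| create_i: "b_proc S = Some (r, B, W) \<Longrightarrow> e \<in> B \<Longrightarrow> dst e \<in> W \<Longrightarrow>
     (\<forall>e'\<in>B. dst e' = dst e \<longrightarrow> tm e \<le> tm e') \<Longrightarrow>
     \<not> in_queue S (dst e) \<Longrightarrow> above (b_sig S (dst e)) (tm e) \<Longrightarrow>
     bfs_step E S (S\<lparr>b_recs := b_recs S @ [(dst e, Suc (r_level (b_recs S ! r)), tm e, Some (r, e))],
                    b_queue := b_queue S @ [length (b_recs S)],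
                    b_sig := (b_sig S)(dst e := Some (tm e)),
                    b_trav := insert e (b_trav S),
                    b_proc := Some (r, B, W - {dst e})\<rparr>)"
| update_ii: "b_proc S = Some (r, B, W) \<Longrightarrow> e \<in> B \<Longrightarrow> dst e \<in> W \<Longrightarrow>
     (\<forall>e'\<in>B. dst e' = dst e \<longrightarrow> tm e \<le> tm e') \<Longrightarrow>
     i \<in> set (b_queue S) \<Longrightarrow> r_vertex (b_recs S ! i) = dst e \<Longrightarrow>
     r_level (b_recs S ! i) = Suc (r_level (b_recs S ! r)) \<Longrightarrow>
     above (b_sig S (dst e)) (tm e) \<Longrightarrow>
     bfs_step E S (S\<lparr>b_recs := (b_recs S)[i := (dst e, Suc (r_level (b_recs S ! r)), tm e, Some (r, e))],
                    b_sig := (b_sig S)(dst e := Some (tm e)),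
                    b_trav := insert e (b_trav S),
                    b_proc := Some (r, B, W - {dst e})\<rparr>)"
| create_iii: "b_proc S = Some (r, B, W) \<Longrightarrow> e \<in> B \<Longrightarrow> dst e \<in> W \<Longrightarrow>
     (\<forall>e'\<in>B. dst e' = dst e \<longrightarrow> tm e \<le> tm e') \<Longrightarrow>
     in_queue S (dst e) \<Longrightarrow> \<not> in_queue_lvl S (dst e) (Suc (r_level (b_recs S ! r))) \<Longrightarrow>
     above (b_sig S (dst e)) (tm e) \<Longrightarrow>
     bfs_step E S (S\<lparr>b_recs := b_recs S @ [(dst e, Suc (r_level (b_recs S ! r)), tm e, Some (r, e))],
                    b_queue := b_queue S @ [length (b_recs S)],
                    b_sig := (b_sig S)(dst e := Some (tm e)),
                    b_trav := insert e (b_trav S),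
                    b_proc := Some (r, B, W - {dst e})\<rparr>)"
| skip: "b_proc S = Some (r, B, W) \<Longrightarrow> e \<in> B \<Longrightarrow> dst e \<in> W \<Longrightarrow>
     (\<forall>e'\<in>B. dst e' = dst e \<longrightarrow> tm e \<le> tm e') \<Longrightarrow>
     \<not> above (b_sig S (dst e)) (tm e) \<Longrightarrow>
     bfs_step E S (S\<lparr>b_trav := insert e (b_trav S),
                    b_proc := Some (r, B, W - {dst e})\<rparr>)"

definition bfs_final :: "'v bfs_state \<Rightarrow> bool" where
  "bfs_final S \<longleftrightarrow> b_queue S = [] \<and> b_proc S = None"

definition brec_to_occ :: "'v brec \<Rightarrow> 'v occ" where
  "brec_to_occ r = (fst r, fst (snd (snd r)), snd (snd (snd r)))"

definition bfs_tree :: "'v tedge set \<Rightarrow> 'v \<Rightarrow> real \<Rightarrow> 'v occ list \<Rightarrow> bool" where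
  "bfs_tree E s ts T \<longleftrightarrow>
     (\<exists>S. (bfs_step E)\<^sup>*\<^sup>* (bfs_init s ts) S \<and> bfs_final S \<and> T = map brec_to_occ (b_recs S))"

end

theory Submission
  imports Defs
begin

(*
  Both searches maintain a value sigma(x) for every vertex and build a tree of occurrences.
  The proof isolates what a finished run guarantees and then shows that both algorithms
  produce it.

  A "search tree" labelled by sigma is a list of occurrences in which the root is s at time ts,
  every tree edge is an edge of E joining its parent occurrence to the child occurrence at the
  child's time (and not before the parent's time), and every finite value sigma(x) is the time
  of some occurrence of x.  It is "complete" if moreover sigma is closed under relaxation:
  from every occurrence, every edge leaving it at or after its time leads to a vertex whose
  sigma value is at most the time of that edge.

  (1) In a search tree, root paths are temporal paths ending at the occurrence's time.
  (2) In a complete tree, sigma(y) <= t_end P for every temporal path P from s to y.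

  (3) DFS-v1 and BFS preserve invariants which imply completeness at termination:
  sigma only decreases; an edge is discarded only when its head is already reached in time;
  for DFS every occurrence is closed unless it lies on the current root path, and for BFS
  every dequeued record is closed except the one being processed.
*)

section \<open>Temporal paths\<close>

lemma temporal_path_single:
  "e \<in> E \<Longrightarrow> ts \<le> tm e \<Longrightarrow> temporal_path E (src e) (dst e) ts [e]"
  by (simp add: temporal_path_def)

lemma temporal_path_snoc:
  assumes P: "temporal_path E x y ts P" and e: "e \<in> E" "src e = y" "t_end P \<le> tm e"
  shows "temporal_path E x (dst e) ts (P @ [e])"
proof -
  have ne: "P \<noteq> []" using P by (simp add: temporal_path_def)
  have last_nth: "P ! (length P - 1) = last P" using ne by (simp add: last_conv_nth)
  have "dst ((P@[e]) ! k) = src ((P@[e]) ! Suc k) \<and> tm ((P@[e]) ! k) \<le> tm ((P@[e]) ! Suc k)"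
    if k: "Suc k < length (P@[e])" for k
  proof (cases "Suc k < length P")
    case True
    then show ?thesis using P by (simp add: nth_append temporal_path_def)
  next
    case False
    then have "k = length P - 1" using k ne by auto
    then show ?thesis using P e last_nth ne False by (simp add: nth_append temporal_path_def t_end_def)
  qed
  then show ?thesis using P e ne by (simp add: temporal_path_def)
qed

section \<open>Search trees labelled by sigma\<close>

definition sig_le :: "real option \<Rightarrow> real \<Rightarrow> bool" where
  "sig_le o' t \<longleftrightarrow> (\<exists>\<tau>. o' = Some \<tau> \<and> \<tau> \<le> t)"

definition closed_occ :: "'v tedge set \<Rightarrow> ('v \<Rightarrow> real option) \<Rightarrow> 'v occ list \<Rightarrow> nat \<Rightarrow> bool" where
  "closed_occ E \<sigma> T i \<longleftrightarrow>
     (\<forall>e\<in>E. src e = occ_vertex (T!i) \<longrightarrow> occ_time (T!i) \<le> tm e \<longrightarrow> sig_le (\<sigma> (dst e)) (tm e))"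

definition search_tree :: "'v tedge set \<Rightarrow> 'v \<Rightarrow> real \<Rightarrow> 'v occ list \<Rightarrow> ('v \<Rightarrow> real option) \<Rightarrow> bool" where
  "search_tree E s ts T \<sigma> \<longleftrightarrow>
     (\<forall>i<length T. occ_parent (T!i) = None \<longrightarrow> occ_vertex (T!i) = s \<and> occ_time (T!i) = ts) \<and>
     (\<forall>i<length T. \<forall>p e. occ_parent (T!i) = Some (p,e) \<longrightarrow>
        p < i \<and> e \<in> E \<and> src e = occ_vertex (T!p) \<and> dst e = occ_vertex (T!i) \<and>
        tm e = occ_time (T!i) \<and> occ_time (T!p) \<le> tm e) \<and>
     (\<forall>x \<tau>. \<sigma> x = Some \<tau> \<longrightarrow> (\<exists>i<length T. occ_vertex (T!i) = x \<and> occ_time (T!i) = \<tau>)) \<and>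
     sig_le (\<sigma> s) ts"

definition complete_tree :: "'v tedge set \<Rightarrow> 'v \<Rightarrow> real \<Rightarrow> 'v occ list \<Rightarrow> ('v \<Rightarrow> real option) \<Rightarrow> bool" where
  "complete_tree E s ts T \<sigma> \<longleftrightarrow> search_tree E s ts T \<sigma> \<and> (\<forall>i<length T. closed_occ E \<sigma> T i)"

lemma search_tree_parentD:
  "search_tree E s ts T \<sigma> \<Longrightarrow> i < length T \<Longrightarrow> occ_parent (T!i) = Some (p,e) \<Longrightarrow>
   p < i \<and> e \<in> E \<and> src e = occ_vertex (T!p) \<and> dst e = occ_vertex (T!i) \<and>
   tm e = occ_time (T!i) \<and> occ_time (T!p) \<le> tm e"
  unfolding search_tree_def by blast

lemma search_tree_sigD:
  "search_tree E s ts T \<sigma> \<Longrightarrow> \<sigma> x = Some \<tau> \<Longrightarrow> \<exists>i<length T. occ_vertex (T!i) = x \<and> occ_time (T!i) = \<tau>"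
  unfolding search_tree_def by blast

lemma search_tree_path:
  assumes T: "search_tree E s ts T \<sigma>" and tp: "tree_path T i P"
  shows "(P = [] \<and> occ_vertex (T!i) = s \<and> occ_time (T!i) = ts) \<or>
         (temporal_path E s (occ_vertex (T!i)) ts P \<and> t_end P = occ_time (T!i))"
  using tp
proof (induction rule: tree_path.induct)
  case (root i)
  then show ?case using T by (simp add: search_tree_def)
next
  case (step i p e P)
  have par: "e \<in> E" "src e = occ_vertex (T!p)" "dst e = occ_vertex (T!i)"
    "tm e = occ_time (T!i)" "occ_time (T!p) \<le> tm e"
    using search_tree_parentD[OF T step.hyps(1,2)] by auto
  from step.IH show ?case
  proof
    assume "P = [] \<and> occ_vertex (T!p) = s \<and> occ_time (T!p) = ts"
    then show ?thesis using par temporal_path_single[of e E ts] by (auto simp: t_end_def)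
  next
    assume "temporal_path E s (occ_vertex (T!p)) ts P \<and> t_end P = occ_time (T!p)"
    then show ?thesis using par temporal_path_snoc[of E s "occ_vertex (T!p)" ts P e]
      by (auto simp: t_end_def)
  qed
qed

text \<open>Parents precede their children, so every occurrence has a root path.\<close>
lemma search_tree_path_exists:
  assumes T: "search_tree E s ts T \<sigma>"
  shows "i < length T \<Longrightarrow> \<exists>P. tree_path T i P"
proof (induction i rule: less_induct)
  case (less i)
  show ?case
  proof (cases "occ_parent (T!i)")
    case None
    then show ?thesis using less.prems tree_path.root by blast
  next
    case (Some pe)
    then obtain p e where pe: "occ_parent (T!i) = Some (p,e)" by (cases pe) auto
    then have "p < i" using search_tree_parentD[OF T less.prems] by blast
    then obtain P where "tree_path T p P" using less by auto
    then show ?thesis using tree_path.step[OF less.prems pe] by blast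
  qed
qed

lemma complete_tree_relaxed:
  assumes T: "complete_tree E s ts T \<sigma>" and u: "\<sigma> u = Some \<tau>"
    and e: "e \<in> E" "src e = u" "\<tau> \<le> tm e"
  shows "sig_le (\<sigma> (dst e)) (tm e)"
proof -
  have "search_tree E s ts T \<sigma>" using T by (simp add: complete_tree_def)
  from search_tree_sigD[OF this u] obtain i
    where "i < length T" "occ_vertex (T!i) = u" "occ_time (T!i) = \<tau>" by blast
  moreover have "closed_occ E \<sigma> T i" using T \<open>i < length T\<close> by (simp add: complete_tree_def)
  ultimately show ?thesis using e by (auto simp: closed_occ_def)
qed

lemma complete_tree_lower_bound:
  assumes T: "complete_tree E s ts T \<sigma>" and P: "temporal_path E s y ts P"
  shows "sig_le (\<sigma> y) (t_end P)"
proof -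
  have ne: "P \<noteq> []" and sub: "set P \<subseteq> E" using P by (auto simp: temporal_path_def)
  have "sig_le (\<sigma> (dst (P!k))) (tm (P!k))" if "k < length P" for k
    using that
  proof (induction k)
    case 0
    have "src (P!0) = s" "ts \<le> tm (P!0)" using P ne by (auto simp: temporal_path_def hd_conv_nth)
    moreover obtain \<tau> where \<tau>: "\<sigma> s = Some \<tau>" "\<tau> \<le> ts"
      using T by (auto simp: complete_tree_def search_tree_def sig_le_def)
    moreover have "P!0 \<in> E" using sub ne by auto
    ultimately show ?case using complete_tree_relaxed[OF T \<tau>(1), of "P!0"] by simp
  next
    case (Suc k)
    then obtain \<tau> where \<tau>: "\<sigma> (dst (P!k)) = Some \<tau>" "\<tau> \<le> tm (P!k)" by (auto simp: sig_le_def)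
    have "src (P!Suc k) = dst (P!k)" "tm (P!k) \<le> tm (P!Suc k)"
      using P Suc.prems by (auto simp: temporal_path_def)
    moreover have "P!Suc k \<in> E" using sub Suc.prems by auto
    ultimately show ?case using complete_tree_relaxed[OF T \<tau>(1), of "P!Suc k"] \<tau>(2) by simp
  qed
  then have "sig_le (\<sigma> (dst (last P))) (tm (last P))" using ne by (simp add: last_conv_nth)
  moreover have "dst (last P) = y" using P by (simp add: temporal_path_def)
  ultimately show ?thesis by (simp add: t_end_def)
qed

lemma complete_tree_foremost:
  assumes T: "complete_tree E s ts T \<sigma>" and vs: "v \<noteq> s"
  shows "(occs_of T v \<noteq> {} \<longrightarrow>
            (\<forall>i\<in>occs_of T v. (\<forall>j\<in>occs_of T v. occ_time (T ! i) \<le> occ_time (T ! j)) \<longrightarrow>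
               (\<exists>P. tree_path T i P) \<and> (\<forall>P. tree_path T i P \<longrightarrow> foremost_path E s v ts P)))
       \<and> (occs_of T v = {} \<longrightarrow> \<not> (\<exists>P. temporal_path E s v ts P))"
proof -
  have ST: "search_tree E s ts T \<sigma>" using T by (simp add: complete_tree_def)
  have reached: "\<exists>j\<in>occs_of T v. occ_time (T!j) \<le> t_end P'" if P': "temporal_path E s v ts P'" for P'
  proof -
    obtain \<tau> where \<tau>: "\<sigma> v = Some \<tau>" "\<tau> \<le> t_end P'"
      using complete_tree_lower_bound[OF T P'] by (auto simp: sig_le_def)
    then show ?thesis using search_tree_sigD[OF ST \<tau>(1)] by (force simp: occs_of_def)
  qed
  have "(\<exists>P. tree_path T i P) \<and> (\<forall>P. tree_path T i P \<longrightarrow> foremost_path E s v ts P)"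
    if i: "i \<in> occs_of T v" and min: "\<forall>j\<in>occs_of T v. occ_time (T ! i) \<le> occ_time (T ! j)" for i
  proof
    have il: "i < length T" "occ_vertex (T!i) = v" using i by (auto simp: occs_of_def)
    show "\<exists>P. tree_path T i P" using search_tree_path_exists[OF ST il(1)] .
    show "\<forall>P. tree_path T i P \<longrightarrow> foremost_path E s v ts P"
    proof (intro allI impI)
      fix P assume "tree_path T i P"
      then have P: "temporal_path E s v ts P" "t_end P = occ_time (T!i)"
        using search_tree_path[OF ST] il vs by fastforce+
      have "t_end P \<le> t_end P'" if P': "temporal_path E s v ts P'" for P'
      proof -
        obtain j where "j \<in> occs_of T v" "occ_time (T!j) \<le> t_end P'" using reached[OF P'] by blast
        then show ?thesis using min P(2) by fastforce
      qed
      then show "foremost_path E s v ts P" using P(1) by (simp add: foremost_path_def)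
    qed
  qed
  then show ?thesis using reached by blast
qed

section \<open>Preserving the invariant: sigma decreases, occurrences are (re)linked\<close>

definition sig_decr :: "('v \<Rightarrow> real option) \<Rightarrow> ('v \<Rightarrow> real option) \<Rightarrow> bool" where
  "sig_decr \<sigma> \<sigma>' \<longleftrightarrow> (\<forall>x \<tau>. \<sigma> x = Some \<tau> \<longrightarrow> sig_le (\<sigma>' x) \<tau>)"

lemma sig_le_mono: "sig_le o' t \<Longrightarrow> t \<le> t' \<Longrightarrow> sig_le o' t'"
  by (auto simp: sig_le_def)

lemma sig_le_decr: "sig_le (\<sigma> x) t \<Longrightarrow> sig_decr \<sigma> \<sigma>' \<Longrightarrow> sig_le (\<sigma>' x) t"
  unfolding sig_le_def sig_decr_def by force

lemma sig_decr_refl: "sig_decr \<sigma> \<sigma>"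
  by (auto simp: sig_decr_def sig_le_def)

text \<open>Both searches only overwrite sigma(x) by a strictly smaller value.\<close>
lemma sig_decr_update: "above (\<sigma> x) t \<Longrightarrow> sig_decr \<sigma> (\<sigma>(x := Some t))"
  by (cases "\<sigma> x") (auto simp: sig_decr_def sig_le_def)

lemma not_above_sig_le: "\<not> above o' t \<Longrightarrow> sig_le o' t"
  by (cases o') (auto simp: sig_le_def)

lemma closed_occ_decr:
  "closed_occ E \<sigma> T i \<Longrightarrow> sig_decr \<sigma> \<sigma>' \<Longrightarrow> T'!i = T!i \<Longrightarrow> closed_occ E \<sigma>' T' i"
  unfolding closed_occ_def using sig_le_decr by metis

lemma search_tree_relink:
  assumes T: "search_tree E s ts T \<sigma>"
    and j: "j \<le> length T" "length T' = max (length T) (Suc j)"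
    and same: "\<And>k. k < length T' \<Longrightarrow> k \<noteq> j \<Longrightarrow> T'!k = T!k"
    and new: "T'!j = (dst e, tm e, Some (c,e))"
    and c: "c < j" and e: "e \<in> E" "src e = occ_vertex (T!c)" "occ_time (T!c) \<le> tm e"
    and vertex: "j < length T \<Longrightarrow> occ_vertex (T!j) = dst e"
    and orphan: "\<And>k p e'. k < length T \<Longrightarrow> occ_parent (T!k) = Some (p,e') \<Longrightarrow> p \<noteq> j"
    and ab: "above (\<sigma> (dst e)) (tm e)"
  shows "search_tree E s ts T' (\<sigma>(dst e := Some (tm e)))"
proof -
  let ?\<sigma> = "\<sigma>(dst e := Some (tm e))"
  have old: "k < length T" "T'!k = T!k" if "k < length T'" "k \<noteq> j" for k
    using that j same by auto
  have jT': "j < length T'" using j by simp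
  have new_occ: "occ_vertex (T'!j) = dst e" "occ_time (T'!j) = tm e" "occ_parent (T'!j) = Some (c,e)"
    using new by (simp_all add: occ_vertex_def occ_time_def occ_parent_def)
  have root: "occ_vertex (T'!k) = s \<and> occ_time (T'!k) = ts"
    if "k < length T'" "occ_parent (T'!k) = None" for k
    using that old T new_occ(3) by (cases "k = j") (auto simp: search_tree_def)
  have parent: "p < k \<and> e' \<in> E \<and> src e' = occ_vertex (T'!p) \<and> dst e' = occ_vertex (T'!k) \<and>
      tm e' = occ_time (T'!k) \<and> occ_time (T'!p) \<le> tm e'"
    if k: "k < length T'" and pe: "occ_parent (T'!k) = Some (p,e')" for k p e'
  proof (cases "k = j")
    case True
    then show ?thesis using pe new_occ c e old[of c] jT' by auto
  next
    case False
    then have kT: "k < length T" and pe': "occ_parent (T!k) = Some (p,e')" using pe old k by auto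
    have "p < k" "p \<noteq> j" using search_tree_parentD[OF T kT pe'] orphan[OF kT pe'] by auto
    then have "T'!p = T!p" using old[of p] k by simp
    then show ?thesis using search_tree_parentD[OF T kT pe'] old[OF k False] by simp
  qed
  have witness: "\<exists>k<length T'. occ_vertex (T'!k) = x \<and> occ_time (T'!k) = \<tau>"
    if x: "?\<sigma> x = Some \<tau>" for x \<tau>
  proof (cases "x = dst e")
    case True
    then show ?thesis using x new_occ jT' by auto
  next
    case False
    then obtain k where k: "k < length T" "occ_vertex (T!k) = x" "occ_time (T!k) = \<tau>"
      using x search_tree_sigD[OF T, of x \<tau>] by auto
    then have "k \<noteq> j" using False vertex by auto
    then show ?thesis using k same j by (intro exI[of _ k]) auto
  qed
  have "sig_le (?\<sigma> s) ts"
    using sig_le_decr[OF _ sig_decr_update[of \<sigma> "dst e" "tm e", OF ab]] T by (simp add: search_tree_def)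
  then show ?thesis using root parent witness unfolding search_tree_def by blast
qed

lemma search_tree_append:
  assumes T: "search_tree E s ts T \<sigma>"
    and c: "c < length T" and e: "e \<in> E" "src e = occ_vertex (T!c)" "occ_time (T!c) \<le> tm e"
    and ab: "above (\<sigma> (dst e)) (tm e)"
  shows "search_tree E s ts (T @ [(dst e, tm e, Some (c,e))]) (\<sigma>(dst e := Some (tm e)))"
proof (rule search_tree_relink[OF T, of "length T"])
  show "p \<noteq> length T" if "k < length T" "occ_parent (T!k) = Some (p,e')" for k p e'
    using search_tree_parentD[OF T that] that(1) by simp
qed (use c e ab in \<open>simp_all add: nth_append\<close>)

lemma search_tree_update:
  assumes T: "search_tree E s ts T \<sigma>" and j: "j < length T"
    and c: "c < j" and e: "e \<in> E" "src e = occ_vertex (T!c)" "occ_time (T!c) \<le> tm e"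
    and vertex: "occ_vertex (T!j) = dst e"
    and orphan: "\<And>k p e'. k < length T \<Longrightarrow> occ_parent (T!k) = Some (p,e') \<Longrightarrow> p \<noteq> j"
    and ab: "above (\<sigma> (dst e)) (tm e)"
  shows "search_tree E s ts (T[j := (dst e, tm e, Some (c,e))]) (\<sigma>(dst e := Some (tm e)))"
  by (rule search_tree_relink[OF T]) (use assms in simp_all)

section \<open>DFS-v1 produces a complete tree\<close>

inductive ancestor :: "'v occ list \<Rightarrow> nat \<Rightarrow> nat \<Rightarrow> bool" for T where
  refl: "ancestor T j j"
| parent: "j < length T \<Longrightarrow> occ_parent (T!j) = Some (p,e) \<Longrightarrow> ancestor T i p \<Longrightarrow> ancestor T i j"

text \<open>Parents precede children, so ancestors have smaller indices; in particular the root
  occurrence 0 is its own only ancestor.\<close>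
lemma ancestor_le:
  assumes "search_tree E s ts T \<sigma>" shows "ancestor T i j \<Longrightarrow> i \<le> j"
  by (induction rule: ancestor.induct) (auto dest: search_tree_parentD[OF assms])

lemma ancestor_append: "ancestor T i j \<Longrightarrow> ancestor (T @ [x]) i j"
proof (induction rule: ancestor.induct)
  case (refl j)
  then show ?case by (rule ancestor.refl)
next
  case (parent j p e i)
  then show ?case by (intro ancestor.parent[of j _ p e]) (auto simp: nth_append)
qed

lemma ancestor_of_parent: "ancestor T i j \<Longrightarrow> occ_parent (T!j) = Some (p,e) \<Longrightarrow> i = j \<or> ancestor T i p"
  by (induction rule: ancestor.induct) auto

definition dfs_inv :: "'v tedge set \<Rightarrow> 'v \<Rightarrow> real \<Rightarrow> 'v dfs_state \<Rightarrow> bool" where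
  "dfs_inv E s ts S \<longleftrightarrow> search_tree E s ts (d_occ S) (d_sig S) \<and> d_cur S < length (d_occ S) \<and>
     (\<forall>e\<in>d_trav S. sig_le (d_sig S (dst e)) (tm e)) \<and>
     (\<forall>i<length (d_occ S). ancestor (d_occ S) i (d_cur S) \<or> closed_occ E (d_sig S) (d_occ S) i)"

lemma dfs_inv_init: "dfs_inv E s ts (dfs_init s ts)"
  by (auto simp: dfs_inv_def dfs_init_def search_tree_def occ_parent_def occ_vertex_def
      occ_time_def sig_le_def intro: ancestor.refl)

lemma dfs_avail_empty_closed:
  assumes "dfs_avail E S = {}" "\<forall>e\<in>d_trav S. sig_le (d_sig S (dst e)) (tm e)"
  shows "closed_occ E (d_sig S) (d_occ S) (d_cur S)"
  using assms unfolding closed_occ_def dfs_avail_def by blast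

text \<open>Backtracking: the occurrence left behind is closed, so the invariant survives the
  shortening of the current root path.\<close>
lemma dfs_inv_backtrack:
  assumes inv: "dfs_inv E s ts S" and av: "dfs_avail E S = {}"
    and par: "occ_parent (d_occ S ! d_cur S) = Some (p, e0)"
  shows "dfs_inv E s ts (S\<lparr>d_cur := p\<rparr>)"
proof -
  have "p < d_cur S" using inv search_tree_parentD[OF _ _ par] by (auto simp: dfs_inv_def)
  moreover have "closed_occ E (d_sig S) (d_occ S) (d_cur S)"
    using dfs_avail_empty_closed[OF av] inv by (simp add: dfs_inv_def)
  ultimately show ?thesis using inv ancestor_of_parent[OF _ par] by (auto simp: dfs_inv_def)
qed

text \<open>Advancing to a new occurrence extends the current root path by it.\<close>
lemma dfs_inv_advance_new:
  assumes inv: "dfs_inv E s ts S" and e: "e \<in> dfs_avail E S"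
    and ab: "above (d_sig S (dst e)) (tm e)"
  shows "dfs_inv E s ts (S\<lparr>d_occ := d_occ S @ [(dst e, tm e, Some (d_cur S, e))],
                    d_sig := (d_sig S)(dst e := Some (tm e)),
                    d_trav := insert e (d_trav S),
                    d_cur := length (d_occ S)\<rparr>)"
proof -
  let ?T = "d_occ S" and ?c = "d_cur S" and ?\<sigma> = "d_sig S"
  let ?T' = "?T @ [(dst e, tm e, Some (?c, e))]" and ?\<sigma>' = "?\<sigma>(dst e := Some (tm e))"
  have T: "search_tree E s ts ?T ?\<sigma>" and c: "?c < length ?T"
    and trav: "\<forall>e\<in>d_trav S. sig_le (?\<sigma> (dst e)) (tm e)"
    and off_path: "\<forall>i<length ?T. ancestor ?T i ?c \<or> closed_occ E ?\<sigma> ?T i"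
    using inv by (auto simp: dfs_inv_def)
  have decr: "sig_decr ?\<sigma> ?\<sigma>'" using sig_decr_update[of ?\<sigma> "dst e" "tm e", OF ab] .
  have "search_tree E s ts ?T' ?\<sigma>'"
    using search_tree_append[OF T c _ _ _ ab] e by (simp add: dfs_avail_def)
  moreover have "\<forall>e'\<in>insert e (d_trav S). sig_le (?\<sigma>' (dst e')) (tm e')"
    using trav sig_le_decr[OF _ decr] by (auto simp: sig_le_def)
  moreover have "ancestor ?T' i (length ?T) \<or> closed_occ E ?\<sigma>' ?T' i" if i: "i < length ?T'" for i
  proof (cases "i < length ?T")
    case True
    have "ancestor ?T' i (length ?T)" if "ancestor ?T i ?c"
      using ancestor_append[OF that] by (rule ancestor.parent[rotated 2]) (auto simp: occ_parent_def)
    moreover have "closed_occ E ?\<sigma>' ?T' i" if "closed_occ E ?\<sigma> ?T i"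
      using closed_occ_decr[OF that decr] True by (simp add: nth_append)
    ultimately show ?thesis using off_path True by blast
  next
    case False
    then show ?thesis using i ancestor.refl by (metis le_less_Suc_eq length_append_singleton not_le)
  qed
  ultimately show ?thesis by (simp add: dfs_inv_def)
qed

lemma dfs_inv_advance_old:
  assumes inv: "dfs_inv E s ts S" and ab: "\<not> above (d_sig S (dst e)) (tm e)"
  shows "dfs_inv E s ts (S\<lparr>d_trav := insert e (d_trav S)\<rparr>)"
  using inv not_above_sig_le[OF ab] by (simp add: dfs_inv_def)

lemma dfs_inv_step: "dfs_step E S S' \<Longrightarrow> dfs_inv E s ts S \<Longrightarrow> dfs_inv E s ts S'"
  by (induction rule: dfs_step.induct)
    (auto intro: dfs_inv_backtrack dfs_inv_advance_new dfs_inv_advance_old)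

text \<open>At termination the current occurrence is the root, which is also closed; since the root
  is its own only ancestor, every occurrence is closed.\<close>
lemma dfs_complete:
  assumes "dfs_tree E s ts T" shows "\<exists>\<sigma>. complete_tree E s ts T \<sigma>"
proof -
  obtain S where run: "(dfs_step E)\<^sup>*\<^sup>* (dfs_init s ts) S" and fin: "dfs_final E S" and T: "T = d_occ S"
    using assms unfolding dfs_tree_def by blast
  have inv: "dfs_inv E s ts S" using run
    by (induction rule: rtranclp_induct) (auto intro: dfs_inv_init dfs_inv_step)
  then have ST: "search_tree E s ts T (d_sig S)" by (simp add: dfs_inv_def T)
  have c0: "d_cur S = 0" and av: "dfs_avail E S = {}" using fin by (auto simp: dfs_final_def)
  have root_closed: "closed_occ E (d_sig S) T 0"
    using dfs_avail_empty_closed[OF av] inv c0 T by (simp add: dfs_inv_def)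
  have "closed_occ E (d_sig S) T i" if "i < length T" for i
    using inv that c0 T ancestor_le[OF ST, of i 0] root_closed by (auto simp: dfs_inv_def)
  then show ?thesis using ST unfolding complete_tree_def by blast
qed

section \<open>Temporal BFS produces a complete tree\<close>

abbreviation bfs_occs :: "'v bfs_state \<Rightarrow> 'v occ list" where
  "bfs_occs S \<equiv> map brec_to_occ (b_recs S)"

lemma brec_to_occ_simps[simp]:
  "occ_vertex (brec_to_occ x) = r_vertex x"
  "occ_time (brec_to_occ x) = r_time x"
  "occ_parent (brec_to_occ x) = snd (snd (snd x))"
  by (simp_all add: brec_to_occ_def occ_vertex_def occ_time_def occ_parent_def r_vertex_def r_time_def)

definition processing :: "'v tedge set \<Rightarrow> 'v occ list \<Rightarrow> ('v \<Rightarrow> real option) \<Rightarrow> nat \<Rightarrow> nat \<Rightarrow>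
    'v tedge set \<Rightarrow> 'v set \<Rightarrow> bool" where
  "processing E T \<sigma> m r B W \<longleftrightarrow> r < m \<and> B \<subseteq> E \<and>
     (\<forall>e\<in>B. src e = occ_vertex (T!r) \<and> occ_time (T!r) \<le> tm e) \<and>
     (\<forall>k<m. k \<noteq> r \<longrightarrow> closed_occ E \<sigma> T k) \<and>
     (\<forall>e\<in>E. src e = occ_vertex (T!r) \<longrightarrow> occ_time (T!r) \<le> tm e \<longrightarrow>
        (e \<in> B \<and> dst e \<in> W) \<or> sig_le (\<sigma> (dst e)) (tm e))"

text \<open>BFS invariant, where m is the number of records dequeued so far: the queue holds exactly
  the records m, m+1, ...; parents are dequeued records; traversed edges are relaxed; and
  every dequeued record is closed, except possibly the one being processed.\<close>
definition bfs_inv :: "'v tedge set \<Rightarrow> 'v \<Rightarrow> real \<Rightarrow> 'v bfs_state \<Rightarrow> nat \<Rightarrow> bool" where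
  "bfs_inv E s ts S m \<longleftrightarrow> search_tree E s ts (bfs_occs S) (b_sig S) \<and>
     (\<forall>e\<in>b_trav S. sig_le (b_sig S (dst e)) (tm e)) \<and>
     m \<le> length (b_recs S) \<and> b_queue S = [m..<length (b_recs S)] \<and>
     (\<forall>k<length (b_recs S). \<forall>p e. occ_parent (bfs_occs S ! k) = Some (p,e) \<longrightarrow> p < m) \<and>
     (case b_proc S of None \<Rightarrow> (\<forall>k<m. closed_occ E (b_sig S) (bfs_occs S) k)
        | Some (r,B,W) \<Rightarrow> processing E (bfs_occs S) (b_sig S) m r B W)"

lemma bfs_inv_init: "bfs_inv E s ts (bfs_init s ts) 0"
  by (simp add: bfs_inv_def bfs_init_def search_tree_def brec_to_occ_def occ_parent_def
      occ_vertex_def occ_time_def sig_le_def)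

lemma processing_handle:
  assumes p: "processing E T \<sigma> m r B W" and e: "e \<in> B"
    and min: "\<forall>e'\<in>B. dst e' = dst e \<longrightarrow> tm e \<le> tm e'"
    and decr: "sig_decr \<sigma> \<sigma>'" and relaxed: "sig_le (\<sigma>' (dst e)) (tm e)"
    and same: "\<forall>k<m. T'!k = T!k"
  shows "processing E T' \<sigma>' m r B (W - {dst e})"
proof -
  have r: "r < m" "T'!r = T!r" using p same by (auto simp: processing_def)
  have "(e' \<in> B \<and> dst e' \<in> W - {dst e}) \<or> sig_le (\<sigma>' (dst e')) (tm e')"
    if "e' \<in> E" "src e' = occ_vertex (T!r)" "occ_time (T!r) \<le> tm e'" for e'
  proof -
    have "(e' \<in> B \<and> dst e' \<in> W) \<or> sig_le (\<sigma> (dst e')) (tm e')"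
      using p that by (simp add: processing_def)
    moreover have "sig_le (\<sigma>' (dst e')) (tm e')" if "e' \<in> B" "dst e' = dst e"
      using sig_le_mono[OF relaxed] min that by simp
    ultimately show ?thesis using sig_le_decr[OF _ decr] by blast
  qed
  moreover have "closed_occ E \<sigma>' T' k" if "k < m" "k \<noteq> r" for k
  proof -
    have "closed_occ E \<sigma> T k" using p that by (simp add: processing_def)
    then show ?thesis using closed_occ_decr[OF _ decr] same that(1) by blast
  qed
  ultimately show ?thesis using p r unfolding processing_def by simp
qed

text \<open>Dequeuing record m: the edges of B are exactly the untraversed edges leaving it in time,
  so every edge leaving it is pending or (being traversed) relaxed.\<close>
lemma bfs_inv_pop:
  assumes inv: "bfs_inv E s ts S m" and idle: "b_proc S = None" and q: "b_queue S = r # rest"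
    and B: "B = {e \<in> E. src e = r_vertex (b_recs S ! r) \<and> e \<notin> b_trav S \<and>
                          r_time (b_recs S ! r) \<le> tm e}"
  shows "bfs_inv E s ts (S\<lparr>b_queue := rest, b_proc := Some (r, B, dst ` B)\<rparr>) (Suc m)"
proof -
  let ?T = "bfs_occs S" and ?\<sigma> = "b_sig S"
  have "[m..<length (b_recs S)] = r # rest" using inv q by (simp add: bfs_inv_def)
  then have r: "r = m" "m < length (b_recs S)" and rest: "rest = [Suc m..<length (b_recs S)]"
    by (auto simp: upt_eq_Cons_conv)
  have "(e \<in> B \<and> dst e \<in> dst ` B) \<or> sig_le (?\<sigma> (dst e)) (tm e)"
    if "e \<in> E" "src e = occ_vertex (?T!r)" "occ_time (?T!r) \<le> tm e" for e
    using inv that r B by (cases "e \<in> b_trav S") (auto simp: bfs_inv_def)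
  then have "processing E ?T ?\<sigma> (Suc m) r B (dst ` B)"
    using inv idle r B by (auto simp: processing_def bfs_inv_def less_Suc_eq)
  then show ?thesis using inv idle r rest by (auto simp: bfs_inv_def less_Suc_eq)
qed

lemma bfs_inv_finish:
  assumes inv: "bfs_inv E s ts S m" and fin: "b_proc S = Some (r, B, {})"
  shows "bfs_inv E s ts (S\<lparr>b_proc := None\<rparr>) m"
proof -
  have p: "processing E (bfs_occs S) (b_sig S) m r B {}" using inv fin by (simp add: bfs_inv_def)
  then have "closed_occ E (b_sig S) (bfs_occs S) k" if "k < m" for k
    using that unfolding processing_def closed_occ_def by (cases "k = r") auto
  then show ?thesis using inv fin by (simp add: bfs_inv_def)
qed

lemma bfs_inv_create:
  assumes inv: "bfs_inv E s ts S m" and pr: "b_proc S = Some (r, B, W)" and e: "e \<in> B"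
    and min: "\<forall>e'\<in>B. dst e' = dst e \<longrightarrow> tm e \<le> tm e'" and ab: "above (b_sig S (dst e)) (tm e)"
  shows "bfs_inv E s ts (S\<lparr>b_recs := b_recs S @ [(dst e, lvl, tm e, Some (r, e))],
                    b_queue := b_queue S @ [length (b_recs S)],
                    b_sig := (b_sig S)(dst e := Some (tm e)),
                    b_trav := insert e (b_trav S),
                    b_proc := Some (r, B, W - {dst e})\<rparr>) m"
proof -
  let ?T = "bfs_occs S" and ?\<sigma> = "b_sig S" and ?n = "length (b_recs S)"
  let ?T' = "?T @ [(dst e, tm e, Some (r,e))]" and ?\<sigma>' = "?\<sigma>(dst e := Some (tm e))"
  have p: "processing E ?T ?\<sigma> m r B W" and mn: "m \<le> ?n"
    and trav: "\<forall>e\<in>b_trav S. sig_le (?\<sigma> (dst e)) (tm e)"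
    and par: "\<forall>k<?n. \<forall>p e. occ_parent (?T!k) = Some (p,e) \<longrightarrow> p < m"
    using inv pr by (auto simp: bfs_inv_def)
  have r: "r < m" "e \<in> E" "src e = occ_vertex (?T!r)" "occ_time (?T!r) \<le> tm e"
    using p e by (auto simp: processing_def)
  have decr: "sig_decr ?\<sigma> ?\<sigma>'" using sig_decr_update[of ?\<sigma> "dst e" "tm e", OF ab] .
  have "search_tree E s ts ?T' ?\<sigma>'"
    using search_tree_append[of E s ts ?T ?\<sigma>, OF _ _ r(2-4) ab] inv r(1) mn by (simp add: bfs_inv_def)
  moreover have "processing E ?T' ?\<sigma>' m r B (W - {dst e})"
    using processing_handle[OF p e min decr] mn by (auto simp: sig_le_def nth_append)
  moreover have "\<forall>k<Suc ?n. \<forall>p e'. occ_parent (?T'!k) = Some (p,e') \<longrightarrow> p < m"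
    using par r(1) by (auto simp: nth_append less_Suc_eq occ_parent_def)
  moreover have "\<forall>e'\<in>insert e (b_trav S). sig_le (?\<sigma>' (dst e')) (tm e')"
    using trav sig_le_decr[OF _ decr] by (auto simp: sig_le_def)
  ultimately show ?thesis using inv mn by (simp add: bfs_inv_def brec_to_occ_def)
qed

text \<open>Case (ii): the queued record i of dst e gets the new time and predecessor.  No record
  has i as parent, since i has not been dequeued yet.\<close>
lemma bfs_inv_update:
  assumes inv: "bfs_inv E s ts S m" and pr: "b_proc S = Some (r, B, W)" and e: "e \<in> B"
    and min: "\<forall>e'\<in>B. dst e' = dst e \<longrightarrow> tm e \<le> tm e'"
    and i: "i \<in> set (b_queue S)" "r_vertex (b_recs S ! i) = dst e"
    and ab: "above (b_sig S (dst e)) (tm e)"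
  shows "bfs_inv E s ts (S\<lparr>b_recs := (b_recs S)[i := (dst e, lvl, tm e, Some (r, e))],
                    b_sig := (b_sig S)(dst e := Some (tm e)),
                    b_trav := insert e (b_trav S),
                    b_proc := Some (r, B, W - {dst e})\<rparr>) m"
proof -
  let ?T = "bfs_occs S" and ?\<sigma> = "b_sig S" and ?n = "length (b_recs S)"
  let ?T' = "?T[i := (dst e, tm e, Some (r,e))]" and ?\<sigma>' = "?\<sigma>(dst e := Some (tm e))"
  have p: "processing E ?T ?\<sigma> m r B W"
    and trav: "\<forall>e\<in>b_trav S. sig_le (?\<sigma> (dst e)) (tm e)"
    and par: "\<forall>k<?n. \<forall>p e. occ_parent (?T!k) = Some (p,e) \<longrightarrow> p < m"
    and im: "m \<le> i" "i < ?n"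
    using inv pr i by (auto simp: bfs_inv_def)
  have r: "r < m" "e \<in> E" "src e = occ_vertex (?T!r)" "occ_time (?T!r) \<le> tm e"
    using p e by (auto simp: processing_def)
  have decr: "sig_decr ?\<sigma> ?\<sigma>'" using sig_decr_update[of ?\<sigma> "dst e" "tm e", OF ab] .
  have "search_tree E s ts ?T' ?\<sigma>'"
  proof (rule search_tree_update[of E s ts ?T ?\<sigma>, OF _ _ _ r(2-4) _ _ ab])
    show "p \<noteq> i" if "k < length ?T" "occ_parent (?T!k) = Some (p,e')" for k p e'
      using par that im by fastforce
  qed (use inv im r(1) i(2) in \<open>auto simp: bfs_inv_def\<close>)
  moreover have "processing E ?T' ?\<sigma>' m r B (W - {dst e})"
    using processing_handle[OF p e min decr] im by (auto simp: sig_le_def)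
  moreover have "p < m" if "k < ?n" "occ_parent (?T'!k) = Some (p,e')" for k p e'
  proof (cases "k = i")
    case True
    then show ?thesis using r(1) that by (simp add: occ_parent_def)
  next
    case False
    then have "occ_parent (?T!k) = Some (p,e')" using that by simp
    then show ?thesis using par that(1) by blast
  qed
  moreover have "\<forall>e'\<in>insert e (b_trav S). sig_le (?\<sigma>' (dst e')) (tm e')"
    using trav sig_le_decr[OF _ decr] by (auto simp: sig_le_def)
  ultimately show ?thesis using inv by (simp add: bfs_inv_def brec_to_occ_def map_update)
qed

lemma bfs_inv_skip:
  assumes inv: "bfs_inv E s ts S m" and pr: "b_proc S = Some (r, B, W)" and e: "e \<in> B"
    and min: "\<forall>e'\<in>B. dst e' = dst e \<longrightarrow> tm e \<le> tm e'"
    and nab: "\<not> above (b_sig S (dst e)) (tm e)"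
  shows "bfs_inv E s ts (S\<lparr>b_trav := insert e (b_trav S), b_proc := Some (r, B, W - {dst e})\<rparr>) m"
proof -
  have "processing E (bfs_occs S) (b_sig S) m r B (W - {dst e})"
    using processing_handle[of E "bfs_occs S" "b_sig S", OF _ e min sig_decr_refl not_above_sig_le[OF nab]] inv pr
    by (simp add: bfs_inv_def)
  then show ?thesis using inv not_above_sig_le[OF nab] by (simp add: bfs_inv_def)
qed

lemma bfs_inv_step:
  assumes step: "bfs_step E S S'" and inv: "bfs_inv E s ts S m"
  shows "\<exists>m'. bfs_inv E s ts S' m'"
  using step
proof cases
  case (pop r rest B)
  then show ?thesis using bfs_inv_pop[OF inv] by blast
next
  case (finish r B)
  then show ?thesis using bfs_inv_finish[OF inv] by blast
next
  case (create_i r B W e)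
  then show ?thesis using bfs_inv_create[OF inv] by blast
next
  case (update_ii r B W e i)
  then show ?thesis using bfs_inv_update[OF inv] by blast
next
  case (create_iii r B W e)
  then show ?thesis using bfs_inv_create[OF inv] by blast
next
  case (skip r B W e)
  then show ?thesis using bfs_inv_skip[OF inv] by blast
qed

text \<open>At termination nothing is queued or processed, so every record has been dequeued
  and is closed.\<close>
lemma bfs_complete:
  assumes "bfs_tree E s ts T" shows "\<exists>\<sigma>. complete_tree E s ts T \<sigma>"
proof -
  obtain S where run: "(bfs_step E)\<^sup>*\<^sup>* (bfs_init s ts) S" and fin: "bfs_final S"
    and T: "T = bfs_occs S"
    using assms unfolding bfs_tree_def by blast
  have "\<exists>m. bfs_inv E s ts S m" using run
  proof (induction rule: rtranclp_induct)
    case base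
    show ?case using bfs_inv_init by (rule exI)
  next
    case (step S S')
    then show ?case using bfs_inv_step by metis
  qed
  then obtain m where inv: "bfs_inv E s ts S m" by blast
  then have "length (b_recs S) \<le> m" and "\<forall>k<m. closed_occ E (b_sig S) T k"
    using fin T by (auto simp: bfs_inv_def bfs_final_def)
  then show ?thesis using inv T by (auto simp: complete_tree_def bfs_inv_def)
qed

theorem mainTheorem8:
  fixes V :: "'v set" and E :: "'v tedge set" and s v :: 'v and ts :: real
    and T :: "'v occ list"
  assumes "temporal_graph V E" and "s \<in> V"
    and "dfs_tree E s ts T \<or> bfs_tree E s ts T"
    and "v \<in> V" and "v \<noteq> s"
  shows "(occs_of T v \<noteq> {} \<longrightarrow>
            (\<forall>i\<in>occs_of T v. (\<forall>j\<in>occs_of T v. occ_time (T ! i) \<le> occ_time (T ! j)) \<longrightarrow>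
               (\<exists>P. tree_path T i P) \<and> (\<forall>P. tree_path T i P \<longrightarrow> foremost_path E s v ts P)))
       \<and> (occs_of T v = {} \<longrightarrow> \<not> (\<exists>P. temporal_path E s v ts P))"
proof -
  obtain \<sigma> where "complete_tree E s ts T \<sigma>"
    using assms(3) dfs_complete bfs_complete by metis
  then show ?thesis using assms(5) by (rule complete_tree_foremost)
qed

end
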